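(* Let $D$ be a real division algebra with $\dim_{\mathbb{R}} D \geq 2$, and let $n \geq 0$. Let \[ f_n : D^n \times D^n \to D^n,\quad ((a_1,\ldots,a_n),(b_1,\ldots,b_n)) \mapsto (a_1 b_1, \ldots, a_n b_n) \] be componentwise multiplication, regarded as an $\mathbb{R}$-bilinear map. Then $Q(f_n) \leq n d$, where $d = \tfrac{1}{2}\dim_{\mathbb{R}} D$.
   Context: A real division algebra is a finite-dimensional real vector space $D$ with an $\mathbb{R}$-bilinear multiplication $D \times D \to D$, $(a,b)\mapsto ab$, such that for every nonzero $a \in D$ the left multiplication $b \mapsto ab$ is invertible; no associativity or other conditions are imposed. For an $\mathbb{R}$-bilinear map $f : U \times V \to W$ between finite-dimensional real vector spaces, its subrank $Q(f)$ is the largest $r$ such that there exist $\mathbb{R}$-linear maps $\varphi_1 : \mathbb{R}^r \to U$, $\varphi_2 : \mathbb{R}^r \to V$, $\varphi_3 : W \to \mathbb{R}^r$ with $\varphi_3(f(\varphi_1(a), \varphi_2(b))) = (a_1b_1,\ldots,a_rb_r)$ for all $a,b \in \mathbb{R}^r$ (equivalently, the subrank of the corresponding tensor in $U^*\otimes V^*\otimes W$). *)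

theory Defs
  imports "HOL-Analysis.Analysis" "HOL-Library.Function_Algebras"
begin

instantiation "fun" :: (type, real_vector) real_vector
begin
definition scaleR_fun_def: "scaleR r f = (\<lambda>x. r *\<^sub>R f x)"
instance by standard (auto simp: scaleR_fun_def fun_eq_iff scaleR_add_right scaleR_add_left)
end

definition real_division_algebra :: "('a::euclidean_space \<Rightarrow> 'a \<Rightarrow> 'a) \<Rightarrow> bool" where
  "real_division_algebra m \<longleftrightarrow> bilinear m \<and> (\<forall>a. a \<noteq> 0 \<longrightarrow> bij (m a))"

text \<open>D^n as the subspace of functions nat => D supported in {..<n}.\<close>

definition tuples :: "nat \<Rightarrow> (nat \<Rightarrow> 'a::real_vector) set" where
  "tuples n = {x. \<forall>k\<ge>n. x k = 0}"

definition cw_mult :: "('a \<Rightarrow> 'a \<Rightarrow> 'a) \<Rightarrow> (nat \<Rightarrow> 'a) \<Rightarrow> (nat \<Rightarrow> 'a) \<Rightarrow> (nat \<Rightarrow> 'a)" where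
  "cw_mult m x y = (\<lambda>k. m (x k) (y k))"

text \<open>A linear map
  phi1 : R^r -> U is given by the images u 0, ..., u (r-1) of the standard basis, similarly
  phi2 by v, and a linear map phi3 : W -> R^r by its r coordinate functionals psi k, each
  linear on W.  The condition is phi3 (f (phi1 a) (phi2 b)) = (a_1 b_1, ..., a_r b_r).\<close>

definition subrank_witness ::
  "'u::real_vector set \<Rightarrow> 'v::real_vector set \<Rightarrow> 'w::real_vector set \<Rightarrow> ('u \<Rightarrow> 'v \<Rightarrow> 'w) \<Rightarrow> nat \<Rightarrow> bool" where
  "subrank_witness U V W f r \<longleftrightarrow>
     (\<exists>u v psi.
        (\<forall>i<r. u i \<in> U \<and> v i \<in> V) \<and>
        (\<forall>k<r. (\<forall>x\<in>W. \<forall>y\<in>W. psi k (x + y) = psi k x + psi k y) \<and>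
               (\<forall>c. \<forall>x\<in>W. psi k (c *\<^sub>R x) = c * psi k x)) \<and>
        (\<forall>a b :: nat \<Rightarrow> real. \<forall>k<r.
            psi k (f (\<Sum>i<r. a i *\<^sub>R u i) (\<Sum>i<r. b i *\<^sub>R v i)) = a k * b k))"

definition subrank ::
  "'u::real_vector set \<Rightarrow> 'v::real_vector set \<Rightarrow> 'w::real_vector set \<Rightarrow> ('u \<Rightarrow> 'v \<Rightarrow> 'w) \<Rightarrow> nat" where
  "subrank U V W f = (GREATEST r. subrank_witness U V W f r)"

end

theory Submission
  imports Defs Jordan_Normal_Form.Determinant
begin

(*
  A subrank witness of size r for f_n restricts the trilinear form
  (x, y, z) |-> sum_c <x_c y_c, z_c> on D^K (here K = {..<n}) to the unit tensor of size r;
  we show 2 r <= dim D * |K| by induction on |K|.  Let C be the support of the last vector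
  u_(r-1).  The coefficient vectors b in R^r for which sum_j b_j v_j vanishes on C carry a
  restriction of the unit tensor living on K - C, and likewise for the third family g; by
  induction both spaces have dimension at most dim D * |K - C| / 2.  Since D has no zero
  divisors, left multiplication by u_(r-1) is injective on D^C, and the images of the two
  coefficient spaces in D^C (taking b_(r-1) = 0 on the v-side) intersect trivially, because
  pairing them evaluates the unit tensor at the slice r - 1.  Counting dimensions gives
  2 r - 1 <= dim D * |K|, and 2 r <= dim D * |K| follows because dim D is even: in odd
  dimension the determinant of left multiplication would change sign along a half circle
  from x to -x without vanishing.
*)

lemma scaleR_fun_apply [simp]: "(c *\<^sub>R f) x = c *\<^sub>R f x"
  by (simp add: scaleR_fun_def)

lemma sum_fun_apply: "(\<Sum>i\<in>I. f i) x = (\<Sum>i\<in>I. f i x)"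
  by (induction I rule: infinite_finite_induct) simp_all

section \<open>Dimension bounds in finitely spanned real vector spaces\<close>

lemma finite_span_basis:
  fixes V :: "'v::real_vector set"
  assumes "V \<subseteq> span F" "finite F"
  obtains B where "finite B" "B \<subseteq> V" "independent B" "V \<subseteq> span B" "card B = dim V"
proof -
  obtain B where B: "B \<subseteq> V" "independent B" "V \<subseteq> span B" "card B = dim V"
    by (rule basis_exists)
  have "finite B"
    using independent_span_bound[OF assms(2) B(2)] B(1) assms(1) by blast
  then show ?thesis by (rule that[OF _ B])
qed

lemma dim_mono_finite_span:
  fixes V :: "'v::real_vector set"
  assumes "A \<subseteq> V" "V \<subseteq> span F" "finite F"
  shows "dim A \<le> dim V"
proof -
  obtain B where B: "finite B" "V \<subseteq> span B" "card B = dim V"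
    using finite_span_basis[OF assms(2,3)] by metis
  have "dim A \<le> card B"
    using assms(1) B(1,2) by (intro dim_le_card) auto
  with B(3) show ?thesis by simp
qed

lemma dim_le_dim_image_add_dim_kernel:
  fixes f :: "'v::real_vector \<Rightarrow> 'w::real_vector"
  assumes S: "subspace S" "S \<subseteq> span F" "finite F" and f: "linear f"
  shows "dim S \<le> dim (f ` S) + dim {x\<in>S. f x = 0}"
proof -
  define N where "N = {x\<in>S. f x = 0}"
  have "N \<subseteq> span F" using S(2) by (auto simp: N_def)
  then obtain BN where BN: "finite BN" "N \<subseteq> span BN" "card BN = dim N"
    using S(3) by (rule finite_span_basis)
  have "f ` S \<subseteq> f ` span F" using S(2) by (rule image_mono)
  also have "\<dots> = span (f ` F)" by (rule span_linear_image[OF f, symmetric])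
  finally obtain BI where BI: "finite BI" "BI \<subseteq> f ` S" "f ` S \<subseteq> span BI" "card BI = dim (f ` S)"
    using finite_imageI[OF S(3)] by (rule finite_span_basis)
  define P where "P = inv_into S f ` BI"
  have PS: "P \<subseteq> S"
    using BI(2) by (auto simp: P_def inv_into_into)
  have "f (inv_into S f b) = b" if "b \<in> BI" for b
    using that BI(2) by (auto intro: f_inv_into_f)
  then have fP: "f ` P = BI"
    by (simp add: P_def image_image)
  have "S \<subseteq> span (BN \<union> P)"
  proof
    fix x assume x: "x \<in> S"
    have "f x \<in> span (f ` P)" using x BI(3) fP by blast
    then obtain y where y: "y \<in> span P" "f x = f y"
      unfolding span_linear_image[OF f] by (rule imageE)
    have "y \<in> S" using span_minimal[OF PS S(1)] y(1) by blast
    then have "x - y \<in> N"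
      using x y(2) S(1) by (simp add: N_def subspace_diff linear_diff[OF f])
    then have "x - y \<in> span (BN \<union> P)"
      using BN(2) span_mono[of BN "BN \<union> P"] by blast
    moreover have "y \<in> span (BN \<union> P)"
      using y(1) span_mono[of P "BN \<union> P"] by blast
    ultimately show "x \<in> span (BN \<union> P)"
      using span_add by fastforce
  qed
  then have "dim S \<le> card (BN \<union> P)"
    by (rule dim_le_card) (simp add: P_def BN(1) BI(1))
  also have "\<dots> \<le> card BN + card P" by (rule card_Un_le)
  finally show ?thesis
    using card_image_le[OF BI(1), of "inv_into S f"] BN(3) BI(4) unfolding N_def P_def by linarith
qed

lemma dim_add_le_of_inter_zero:
  fixes V :: "'v::real_vector set"
  assumes U: "subspace U1" "subspace U2" "U1 \<subseteq> V" "U2 \<subseteq> V" and V: "V \<subseteq> span F" "finite F"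
    and inter: "U1 \<inter> U2 \<subseteq> {0}"
  shows "dim U1 + dim U2 \<le> dim V"
proof -
  have "U1 \<subseteq> span F" "U2 \<subseteq> span F" using U(3,4) V(1) by auto
  obtain B1 where B1: "finite B1" "B1 \<subseteq> U1" "independent B1" "card B1 = dim U1"
    using \<open>U1 \<subseteq> span F\<close> V(2) by (rule finite_span_basis)
  obtain B2 where B2: "finite B2" "B2 \<subseteq> U2" "independent B2" "card B2 = dim U2"
    using \<open>U2 \<subseteq> span F\<close> V(2) by (rule finite_span_basis)
  have disj: "B1 \<inter> B2 = {}"
    using inter B1(2,3) B2(2) dependent_zero by blast
  have "a v = 0" if sum0: "(\<Sum>v\<in>B1 \<union> B2. a v *\<^sub>R v) = 0" and v: "v \<in> B1 \<union> B2" for a v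
  proof -
    define y where "y = (\<Sum>v\<in>B1. a v *\<^sub>R v)"
    have y2: "(\<Sum>v\<in>B2. a v *\<^sub>R v) = - y"
      using sum0 B1(1) B2(1) disj
      by (simp add: y_def sum.union_disjoint eq_neg_iff_add_eq_0 add.commute)
    have "y \<in> U1" unfolding y_def using B1(2) U(1) by (intro subspace_sum subspace_scale) auto
    moreover have "- y \<in> U2" unfolding y2[symmetric] using B2(2) U(2)
      by (intro subspace_sum subspace_scale) auto
    then have "y \<in> U2" using U(2) subspace_neg by fastforce
    ultimately have "y = 0" using inter by blast
    then have "\<forall>v\<in>B1. a v = 0" "\<forall>v\<in>B2. a v = 0"
      using y2 B1(1,3) B2(1,3) unfolding y_def by (auto simp: dependent_finite)
    then show ?thesis using v by blast
  qed
  then have "independent (B1 \<union> B2)"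
    using B1(1) B2(1) by (auto simp: dependent_finite)
  then have "card (B1 \<union> B2) \<le> dim V"
    using dim_mono_finite_span[of "B1 \<union> B2" V F] B1(2) B2(2) U(3,4) V
    by (auto simp: dim_eq_card_independent)
  then show ?thesis using B1 B2 disj by (simp add: card_Un_disjoint)
qed

section \<open>Finitely supported tuples\<close>

definition vanishing_off :: "nat set \<Rightarrow> (nat \<Rightarrow> 'a::zero) set" where
  "vanishing_off C = {w. \<forall>c. c \<notin> C \<longrightarrow> w c = 0}"

lemma tuples_eq_vanishing_off: "tuples n = vanishing_off {..<n}"
  by (auto simp: tuples_def vanishing_off_def not_less)

lemma subspace_vanishing_off: "subspace (vanishing_off C :: (nat \<Rightarrow> 'a::real_vector) set)"
  by (auto simp: subspace_def vanishing_off_def)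

lemma vanishing_off_representation:
  fixes w :: "nat \<Rightarrow> 'a::euclidean_space"
  assumes "finite C" "w \<in> vanishing_off C"
  shows "w = (\<Sum>(c, b)\<in>C \<times> Basis. inner (w c) b *\<^sub>R 0(c := b))"
proof -
  have "w = (\<Sum>c\<in>C. 0(c := w c))"
  proof
    fix c' show "w c' = (\<Sum>c\<in>C. 0(c := w c)) c'"
      using assms by (auto simp: vanishing_off_def sum_fun_apply sum.delta' cong: if_cong)
  qed
  also have "\<dots> = (\<Sum>c\<in>C. \<Sum>b\<in>Basis. inner (w c) b *\<^sub>R 0(c := b))"
  proof (intro sum.cong refl ext)
    fix c c' show "(0(c := w c)) c' = (\<Sum>b\<in>Basis. inner (w c) b *\<^sub>R 0(c := b)) c'"
      by (cases "c' = c") (simp_all add: sum_fun_apply euclidean_representation)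
  qed
  also have "\<dots> = (\<Sum>(c, b)\<in>C \<times> Basis. inner (w c) b *\<^sub>R 0(c := b))"
    by (rule sum.cartesian_product)
  finally show ?thesis .
qed

definition unit_tuples :: "nat set \<Rightarrow> (nat \<Rightarrow> 'a::euclidean_space) set" where
  "unit_tuples C = (\<lambda>(c, b). 0(c := b)) ` (C \<times> Basis)"

lemma finite_unit_tuples [simp]: "finite C \<Longrightarrow> finite (unit_tuples C)"
  by (simp add: unit_tuples_def)

lemma span_unit_tuples:
  fixes C :: "nat set"
  assumes "finite C"
  shows "span (unit_tuples C :: (nat \<Rightarrow> 'a::euclidean_space) set) = vanishing_off C"
proof (rule span_subspace)
  show "unit_tuples C \<subseteq> (vanishing_off C :: (nat \<Rightarrow> 'a) set)"
    by (auto simp: unit_tuples_def vanishing_off_def)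
  show "vanishing_off C \<subseteq> span (unit_tuples C :: (nat \<Rightarrow> 'a) set)"
  proof
    fix w :: "nat \<Rightarrow> 'a" assume "w \<in> vanishing_off C"
    then have "w = (\<Sum>(c, b)\<in>C \<times> Basis. inner (w c) b *\<^sub>R 0(c := b))"
      by (rule vanishing_off_representation[OF assms])
    also have "\<dots> \<in> span (unit_tuples C)"
      unfolding unit_tuples_def by (intro span_sum) (auto intro: span_scale span_base)
    finally show "w \<in> span (unit_tuples C)" .
  qed
qed (rule subspace_vanishing_off)

lemma tuples_eq_span: "tuples n = span (unit_tuples {..<n})"
  by (simp add: tuples_eq_vanishing_off span_unit_tuples)

lemma dim_vanishing_off:
  assumes "finite C"
  shows "dim (vanishing_off C :: (nat \<Rightarrow> 'a::euclidean_space) set) = card C * DIM('a)"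
proof -
  define e :: "nat \<times> 'a \<Rightarrow> nat \<Rightarrow> 'a" where "e = (\<lambda>(c, b). 0(c := b))"
  have coord: "inner (e p c) b = (if p = (c, b) then 1 else 0)" if "p \<in> C \<times> Basis" "b \<in> Basis" for p c b
    using that by (auto simp: e_def inner_Basis split: if_splits)
  have inj: "inj_on e (C \<times> Basis)"
  proof (rule inj_onI)
    fix p q assume pq: "p \<in> C \<times> Basis" "q \<in> C \<times> Basis" "e p = e q"
    then have "inner (e p (fst q)) (snd q) = 1"
      using coord[where p = q and c = "fst q" and b = "snd q"] by auto
    then show "p = q"
      using pq coord[where p = p and c = "fst q" and b = "snd q"] by (auto split: if_splits)
  qed
  have "a (e p) = 0" if "(\<Sum>x\<in>e ` (C \<times> Basis). a x *\<^sub>R x) = 0" "p \<in> C \<times> Basis" for a p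
  proof -
    have "0 = inner ((\<Sum>q\<in>C \<times> Basis. a (e q) *\<^sub>R e q) (fst p)) (snd p)"
      using that(1) by (simp add: sum.reindex[OF inj])
    also have "\<dots> = (\<Sum>q\<in>C \<times> Basis. if q = p then a (e q) else 0)"
      using that(2) coord by (auto simp: sum_fun_apply inner_sum_left intro!: sum.cong)
    also have "\<dots> = a (e p)" using that(2) assms by (simp add: sum.delta)
    finally show ?thesis by simp
  qed
  then have ind: "independent (unit_tuples C :: (nat \<Rightarrow> 'a) set)"
    using assms by (auto simp: dependent_finite unit_tuples_def e_def[symmetric])
  have "dim (vanishing_off C :: (nat \<Rightarrow> 'a) set) = dim (span (unit_tuples C :: (nat \<Rightarrow> 'a) set))"
    by (simp only: span_unit_tuples[OF assms])
  also have "\<dots> = card (unit_tuples C :: (nat \<Rightarrow> 'a) set)"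
    by (rule dim_span_eq_card_independent[OF ind])
  also have "\<dots> = card C * DIM('a)"
    using assms by (simp add: unit_tuples_def e_def[symmetric] card_image[OF inj] card_cartesian_product)
  finally show ?thesis .
qed

lemma subspace_tuples: "subspace (tuples n :: (nat \<Rightarrow> 'a::real_vector) set)"
  by (simp add: tuples_eq_vanishing_off subspace_vanishing_off)

lemma dim_tuples: "dim (tuples n :: (nat \<Rightarrow> 'a::euclidean_space) set) = n * DIM('a)"
  by (simp add: tuples_eq_vanishing_off dim_vanishing_off)

lemma tuples_functional_representation:
  fixes psi :: "(nat \<Rightarrow> 'a::euclidean_space) \<Rightarrow> real"
  assumes add: "\<forall>x\<in>tuples n. \<forall>y\<in>tuples n. psi (x + y) = psi x + psi y"
    and scale: "\<forall>c. \<forall>x\<in>tuples n. psi (c *\<^sub>R x) = c * psi x"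
  obtains g where "\<And>w. w \<in> tuples n \<Longrightarrow> psi w = (\<Sum>c<n. inner (w c) (g c))"
proof -
  \<comment> \<open>\<open>psi\<close> is only known to be linear on \<open>tuples n\<close>; precomposing the projection \<open>P\<close>
    extends it linearly to all functions\<close>
  define P :: "(nat \<Rightarrow> 'a) \<Rightarrow> nat \<Rightarrow> 'a" where "P w = (\<lambda>c. if c < n then w c else 0)" for w
  have P_tuples: "P w \<in> tuples n" for w by (simp add: P_def tuples_def)
  have P_id: "P w = w" if "w \<in> tuples n" for w using that by (auto simp: P_def tuples_def)
  have lin: "linear (\<lambda>w. psi (P w))"
  proof (rule linearI)
    fix x y :: "nat \<Rightarrow> 'a" and c :: real
    have "P (x + y) = P x + P y" "P (c *\<^sub>R x) = c *\<^sub>R P x" by (auto simp: P_def)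
    then show "psi (P (x + y)) = psi (P x) + psi (P y)" "psi (P (c *\<^sub>R x)) = c *\<^sub>R psi (P x)"
      using add scale P_tuples by simp_all
  qed
  define g where "g c = (\<Sum>b\<in>Basis. psi (0(c := b)) *\<^sub>R b)" for c
  show ?thesis
  proof (rule that)
    fix w :: "nat \<Rightarrow> 'a" assume w: "w \<in> tuples n"
    have "psi w = psi (P (\<Sum>(c, b)\<in>{..<n} \<times> Basis. inner (w c) b *\<^sub>R 0(c := b)))"
      using vanishing_off_representation[of "{..<n}" w] w P_id by (simp add: tuples_eq_vanishing_off)
    also have "\<dots> = (\<Sum>(c, b)\<in>{..<n} \<times> Basis. inner (w c) b * psi (P (0(c := b))))"
      by (simp add: linear_sum[OF lin] linear_scale[OF lin] case_prod_beta)
    also have "\<dots> = (\<Sum>c<n. \<Sum>b\<in>Basis. inner (w c) b * psi (0(c := b)))"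
      by (simp add: sum.cartesian_product[symmetric] P_id tuples_def)
    also have "\<dots> = (\<Sum>c<n. inner (w c) (g c))"
      by (simp add: g_def inner_sum_right mult.commute)
    finally show "psi w = (\<Sum>c<n. inner (w c) (g c))" .
  qed
qed

lemma sum_unit_vector_combination:
  fixes w :: "nat \<Rightarrow> 'a::real_vector"
  assumes "i < r"
  shows "(\<Sum>j<r. (0(i := 1)) j *\<^sub>R w j) = w i"
proof -
  have "(\<Sum>j<r. (0(i := 1)) j *\<^sub>R w j) = (\<Sum>j<r. if j = i then w j else 0)"
    by (rule sum.cong) auto
  then show ?thesis using assms by (simp add: sum.delta)
qed

section \<open>Echelon families of coefficient vectors\<close>

definition echelon_family ::
  "nat \<Rightarrow> nat \<Rightarrow> (nat \<Rightarrow> nat) \<Rightarrow> (nat \<Rightarrow> nat \<Rightarrow> real) \<Rightarrow> bool" where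
  "echelon_family r t k s \<longleftrightarrow>
     (\<forall>l<t. s l \<in> tuples r) \<and> (\<forall>l<t. \<forall>l'<t. s l (k l') = (if l = l' then 1 else 0))"

lemma echelon_family_pivot_less:
  assumes "echelon_family r t k s" "l < t"
  shows "k l < r"
proof (rule ccontr)
  assume "\<not> k l < r"
  then have "s l (k l) = 0" using assms by (auto simp: echelon_family_def tuples_def)
  then show False using assms by (simp add: echelon_family_def)
qed

lemma echelon_family_pivot_vectors:
  assumes "echelon_family r t k s"
  shows "echelon_family r t k (\<lambda>l. 0(k l := 1))"
proof -
  have "k l = k l' \<longleftrightarrow> l = l'" if "l < t" "l' < t" for l l'
    using assms that unfolding echelon_family_def by (metis zero_neq_one)
  then show ?thesis
    using echelon_family_pivot_less[OF assms] by (fastforce simp: echelon_family_def tuples_def)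
qed

lemma dim_le_Suc_dim_coordinate_kernel:
  fixes S :: "(nat \<Rightarrow> real) set"
  assumes "subspace S" "S \<subseteq> tuples r"
  shows "dim S \<le> Suc (dim {b\<in>S. b k = 0})"
proof -
  have "linear (\<lambda>b::nat \<Rightarrow> real. b k)" by (rule linearI) simp_all
  then have "dim S \<le> dim ((\<lambda>b. b k) ` S) + dim {b\<in>S. b k = 0}"
    using assms by (intro dim_le_dim_image_add_dim_kernel[where F = "unit_tuples {..<r}"])
      (simp_all add: tuples_eq_span)
  moreover have "dim ((\<lambda>b::nat \<Rightarrow> real. b k) ` S) \<le> 1"
    using dim_subset_UNIV[of "(\<lambda>b::nat \<Rightarrow> real. b k) ` S"] by simp
  ultimately show ?thesis by linarith
qed

lemma echelon_family_exists:
  assumes "subspace S" "S \<subseteq> tuples r" "t \<le> dim S"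
  shows "\<exists>k s. echelon_family r t k s \<and> (\<forall>l<t. s l \<in> S)"
  using assms
proof (induction t arbitrary: S)
  case 0
  then show ?case by (simp add: echelon_family_def)
next
  case (Suc t)
  have "\<not> S \<subseteq> span {}"
    using dim_le_card[of S "{}"] Suc.prems(3) by auto
  then obtain s0 where s0: "s0 \<in> S" "s0 \<noteq> 0" by auto
  then obtain k0 where k0: "s0 k0 \<noteq> 0" by (auto simp: fun_eq_iff)
  define S' where "S' = {b\<in>S. b k0 = 0}"
  have "subspace S'" using Suc.prems(1) by (auto simp: S'_def subspace_def)
  moreover have "S' \<subseteq> tuples r" using Suc.prems(2) by (auto simp: S'_def)
  moreover have "t \<le> dim S'"
    using dim_le_Suc_dim_coordinate_kernel[OF Suc.prems(1,2), of k0] Suc.prems(3) by (simp add: S'_def)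
  ultimately obtain k s where ks: "echelon_family r t k s" "\<forall>l<t. s l \<in> S'"
    using Suc.IH by blast
  have sk0: "s l k0 = 0" if "l < t" for l using ks(2) that by (simp add: S'_def)
  define s1 where "s1 = (1 / s0 k0) *\<^sub>R s0"
  define s2 where "s2 = s1 - (\<Sum>m<t. s1 (k m) *\<^sub>R s m)"
  have s2S: "s2 \<in> S"
    unfolding s2_def s1_def using s0(1) ks(2) Suc.prems(1)
    by (intro subspace_diff subspace_sum subspace_scale) (auto simp: S'_def)
  have s2k0: "s2 k0 = 1"
    using k0 sk0 by (simp add: s2_def s1_def sum_fun_apply)
  have s2k: "s2 (k l) = 0" if "l < t" for l
  proof -
    have "(\<Sum>m<t. s1 (k m) * s m (k l)) = (\<Sum>m<t. if m = l then s1 (k m) else 0)"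
      using ks(1) that by (intro sum.cong) (auto simp: echelon_family_def)
    then show ?thesis using that by (simp add: s2_def sum_fun_apply)
  qed
  have "case_nat s2 s l (case_nat k0 k l') = (if l = l' then 1 else 0)"
    if "l < Suc t" "l' < Suc t" for l l'
    using that ks(1) sk0 s2k0 s2k by (cases l; cases l') (auto simp: echelon_family_def)
  then have "echelon_family r (Suc t) (case_nat k0 k) (case_nat s2 s) \<and>
      (\<forall>l<Suc t. case_nat s2 s l \<in> S)"
    using ks s2S Suc.prems(2) unfolding echelon_family_def
    by (auto simp: S'_def less_Suc_eq_0_disj)
  then show ?case by blast
qed

section \<open>Real division algebras\<close>

lemma real_division_algebra_mult_eq_0_iff:
  assumes "real_division_algebra m"
  shows "m a b = 0 \<longleftrightarrow> a = 0 \<or> b = 0"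
proof -
  have bil: "bilinear m" and bij: "a \<noteq> 0 \<Longrightarrow> bij (m a)" for a
    using assms by (auto simp: real_division_algebra_def)
  have "b = 0" if "a \<noteq> 0" "m a b = m a 0"
    using that bij[OF that(1)] by (auto dest: bij_is_inj injD)
  then show ?thesis by (auto simp: bilinear_lzero[OF bil] bilinear_rzero[OF bil])
qed

lemma continuous_on_det_mat:
  fixes F :: "real \<Rightarrow> nat \<times> nat \<Rightarrow> real"
  assumes "\<And>i j. continuous_on S (\<lambda>t. F t (i, j))"
  shows "continuous_on S (\<lambda>t. det (mat N N (F t)))"
proof -
  have "det (mat N N (F t)) =
      (\<Sum>p \<in> {p. p permutes {0..<N}}. of_int (sign p) * (\<Prod>i = 0..<N. F t (i, p i)))" for t
  proof -
    have "det (mat N N (F t)) =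
        (\<Sum>p \<in> {p. p permutes {0..<N}}. of_int (sign p) * (\<Prod>i = 0..<N. mat N N (F t) $$ (i, p i)))"
      by (rule det_def') auto
    also have "\<dots> = (\<Sum>p \<in> {p. p permutes {0..<N}}. of_int (sign p) * (\<Prod>i = 0..<N. F t (i, p i)))"
      by (intro sum.cong prod.cong refl) (auto simp: permutes_in_image)
    finally show ?thesis .
  qed
  then show ?thesis by (simp only:) (intro continuous_intros assms)
qed

lemma det_mat_of_injective_linear_neq_0:
  fixes f :: "'a::euclidean_space \<Rightarrow> 'a"
  assumes f: "linear f" "inj f" and bs: "set bs = Basis" "distinct bs"
  shows "det (mat (length bs) (length bs) (\<lambda>(i, j). inner (f (bs ! j)) (bs ! i))) \<noteq> 0"
    (is "det ?M \<noteq> 0")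
proof
  define N where "N = length bs"
  have bs_inner: "inner (bs ! i) (bs ! j) = (if i = j then 1 else 0)" if "i < N" "j < N" for i j
    using that bs nth_mem[of i bs] nth_mem[of j bs]
    by (auto simp: N_def inner_Basis nth_eq_iff_index_eq)
  assume "det ?M = 0"
  then obtain v where v: "v \<in> carrier_vec N" "v \<noteq> 0\<^sub>v N" "?M *\<^sub>v v = 0\<^sub>v N"
    using det_0_iff_vec_prod_zero[of ?M N] by (auto simp: N_def)
  define y where "y = (\<Sum>j<N. v $ j *\<^sub>R bs ! j)"
  have y_coord: "inner y (bs ! i) = v $ i" if "i < N" for i
  proof -
    have "inner y (bs ! i) = (\<Sum>j<N. if j = i then v $ j else 0)"
      unfolding y_def inner_sum_left using that by (intro sum.cong) (auto simp: bs_inner)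
    then show ?thesis using that by simp
  qed
  have "f y = 0"
  proof (rule euclidean_eqI)
    fix b :: 'a assume "b \<in> Basis"
    then obtain i where i: "i < N" "b = bs ! i" using bs(1) by (metis N_def in_set_conv_nth)
    have "inner (f y) (bs ! i) = (\<Sum>j<N. v $ j * inner (f (bs ! j)) (bs ! i))"
      by (simp add: y_def linear_sum[OF f(1)] linear_scale[OF f(1)] inner_sum_left)
    also have "\<dots> = (?M *\<^sub>v v) $ i"
      using i v(1) by (simp add: N_def mult_mat_vec_def scalar_prod_def lessThan_atLeast0 mult.commute)
    finally show "inner (f y) b = inner 0 b" using v(3) i by simp
  qed
  moreover have "y \<noteq> 0"
  proof
    assume "y = 0"
    then have "v = 0\<^sub>v N" using v(1) y_coord by (intro eq_vecI) auto
    with v(2) show False ..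
  qed
  ultimately show False using f linear_0[OF f(1)] by (metis injD)
qed

lemma real_division_algebra_even_dim:
  fixes m :: "'a::euclidean_space \<Rightarrow> 'a \<Rightarrow> 'a"
  assumes DA: "real_division_algebra m" and two_le_dim: "DIM('a) \<ge> 2"
  shows "even DIM('a)"
proof (rule ccontr)
  assume odd: "odd DIM('a)"
  have bil: "bilinear m" and bij: "\<And>a. a \<noteq> 0 \<Longrightarrow> bij (m a)"
    using DA by (auto simp: real_division_algebra_def)
  obtain bs :: "'a list" where bs: "set bs = Basis" "distinct bs"
    using finite_distinct_list[OF finite_Basis] by blast
  define N where "N = length bs"
  have N: "N = DIM('a)" using distinct_card[OF bs(2)] bs(1) by (simp add: N_def)
  define M where "M z = mat N N (\<lambda>(i, j). inner (m z (bs ! j)) (bs ! i))" for z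
  have det_M: "det (M z) \<noteq> 0" if "z \<noteq> 0" for z
    unfolding M_def N_def using bil bij[OF that] bs
    by (intro det_mat_of_injective_linear_neq_0) (auto simp: bilinear_def bij_is_inj)
  define x where "x = bs ! 0"
  define y where "y = bs ! 1"
  have xy: "inner x x = 1" "inner y y = 1" "inner y x = 0"
    using bs two_le_dim N nth_mem[of 0 bs] nth_mem[of 1 bs]
    by (auto simp: x_def y_def N_def inner_Basis nth_eq_iff_index_eq)
  \<comment> \<open>along the half circle \<open>p\<close> from \<open>x\<close> to \<open>-x\<close> the determinant of left multiplication
    never vanishes, yet it changes sign since \<open>M (-z) = -M z\<close> has odd size\<close>
  define p where "p t = cos t *\<^sub>R x + sin t *\<^sub>R y" for t
  have "p t \<noteq> 0" for t
  proof
    assume "p t = 0"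
    then have "inner (p t) x = 0" "inner (p t) y = 0" by simp_all
    then have "cos t = 0" "sin t = 0" using xy by (simp_all add: p_def inner_add_left inner_commute[of x y])
    then show False using sin_cos_squared_add[of t] by simp
  qed
  then have det_p: "det (M (p t)) \<noteq> 0" for t by (rule det_M)
  have "continuous_on {0..pi} (\<lambda>t. det (M (p t)))"
  proof -
    have "M (p t) = mat N N (\<lambda>(i, j). cos t * inner (m x (bs ! j)) (bs ! i) + sin t * inner (m y (bs ! j)) (bs ! i))" for t
      unfolding M_def p_def
      by (rule cong[OF refl]) (auto simp: bilinear_ladd[OF bil] bilinear_lmul[OF bil] inner_add_left)
    then show ?thesis by (simp only:) (intro continuous_on_det_mat, auto intro!: continuous_intros)
  qed
  moreover have "det (M (p pi)) = - det (M (p 0))"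
  proof -
    have "M (p pi) = (-1) \<cdot>\<^sub>m M (p 0)"
      by (rule eq_matI) (auto simp: M_def p_def bilinear_lneg[OF bil])
    then show ?thesis using odd N by (simp add: M_def)
  qed
  ultimately obtain t where "t \<in> {0..pi}" "det (M (p t)) = 0"
    using IVT'[of "\<lambda>t. det (M (p t))" 0 0 pi] IVT2'[of "\<lambda>t. det (M (p t))" pi 0 0]
    by (cases "det (M (p 0)) \<ge> 0") (auto intro: pi_ge_zero)
  then show False using det_p by blast
qed

section \<open>Restrictions of componentwise multiplication to the unit tensor\<close>

text \<open>The form \<^term>\<open>cw_form m K\<close> is the tensor of componentwise multiplication on
  \<open>D^K\<close>, with the output coordinates read off by inner products.  A subrank witness of
  size \<open>r\<close> becomes a family \<open>u, v, g\<close> restricting it to the unit tensor of size \<open>r\<close>,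
  where \<open>g k\<close> represents the \<open>k\<close>-th coordinate functional.\<close>

definition cw_form ::
  "('a::real_inner \<Rightarrow> 'a \<Rightarrow> 'a) \<Rightarrow> nat set \<Rightarrow>
    (nat \<Rightarrow> 'a) \<Rightarrow> (nat \<Rightarrow> 'a) \<Rightarrow> (nat \<Rightarrow> 'a) \<Rightarrow> real" where
  "cw_form m K x y z = (\<Sum>c\<in>K. inner (m (x c) (y c)) (z c))"

definition unit_tensor_restriction ::
  "('a::real_inner \<Rightarrow> 'a \<Rightarrow> 'a) \<Rightarrow> nat set \<Rightarrow> nat \<Rightarrow>
    (nat \<Rightarrow> nat \<Rightarrow> 'a) \<Rightarrow> (nat \<Rightarrow> nat \<Rightarrow> 'a) \<Rightarrow> (nat \<Rightarrow> nat \<Rightarrow> 'a) \<Rightarrow> bool" where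
  "unit_tensor_restriction m K r u v g \<longleftrightarrow>
     (\<forall>i<r. \<forall>j<r. \<forall>k<r. cw_form m K (u i) (v j) (g k) = (if i = j \<and> j = k then 1 else 0))"

lemma cw_form_scaleR_sum_second:
  assumes "bilinear m"
  shows "cw_form m K x (\<Sum>j\<in>J. b j *\<^sub>R y j) z = (\<Sum>j\<in>J. b j * cw_form m K x (y j) z)"
proof -
  have "m (x c) (\<Sum>j\<in>J. b j *\<^sub>R y j c) = (\<Sum>j\<in>J. b j *\<^sub>R m (x c) (y j c))" for c
  proof -
    have "linear (m (x c))" using assms by (simp add: bilinear_def)
    then show ?thesis by (simp add: linear_sum linear_scale)
  qed
  then show ?thesis
    by (simp add: cw_form_def sum_fun_apply inner_sum_left sum_distrib_left sum.swap[of _ K])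
qed

lemma cw_form_scaleR_sum_third:
  "cw_form m K x y (\<Sum>k\<in>J. b k *\<^sub>R z k) = (\<Sum>k\<in>J. b k * cw_form m K x y (z k))"
  by (simp add: cw_form_def sum_fun_apply inner_sum_right sum_distrib_left sum.swap[of _ K])

lemma unit_tensor_restriction_combination:
  assumes "bilinear m" "unit_tensor_restriction m K r u v g" "i < r"
  shows "cw_form m K (u i) (\<Sum>j<r. b j *\<^sub>R v j) (\<Sum>k<r. y k *\<^sub>R g k) = b i * y i"
proof -
  have "cw_form m K (u i) (v j) (\<Sum>k<r. y k *\<^sub>R g k) = (if j = i then y i else 0)" if "j < r" for j
  proof -
    have "cw_form m K (u i) (v j) (\<Sum>k<r. y k *\<^sub>R g k) = (\<Sum>k<r. y k * (if i = j \<and> j = k then 1 else 0))"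
      using assms(2,3) that by (simp add: cw_form_scaleR_sum_third unit_tensor_restriction_def)
    also have "\<dots> = (\<Sum>k<r. if k = i then (if j = i then y k else 0) else 0)"
      by (rule sum.cong) auto
    finally show ?thesis using assms(3) by (simp add: sum.delta)
  qed
  then have "cw_form m K (u i) (\<Sum>j<r. b j *\<^sub>R v j) (\<Sum>k<r. y k *\<^sub>R g k)
      = (\<Sum>j<r. b j * (if j = i then y i else 0))"
    using assms(1) by (simp add: cw_form_scaleR_sum_second)
  also have "\<dots> = (\<Sum>j<r. if j = i then b j * y i else 0)"
    by (rule sum.cong) auto
  also have "\<dots> = b i * y i" using assms(3) by (simp add: sum.delta)
  finally show ?thesis .
qed

lemma unit_tensor_restriction_echelon:
  assumes "bilinear m" "unit_tensor_restriction m K r u v g"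
    and "echelon_family r t k s" "echelon_family r t k s'"
  shows "unit_tensor_restriction m K t
           (\<lambda>l. u (k l)) (\<lambda>l. \<Sum>j<r. s l j *\<^sub>R v j) (\<lambda>l. \<Sum>j<r. s' l j *\<^sub>R g j)"
  using assms unit_tensor_restriction_combination[OF assms(1,2) echelon_family_pivot_less[OF assms(3)]]
  by (auto simp: unit_tensor_restriction_def echelon_family_def)

lemma unit_tensor_restriction_remove_indices:
  assumes "unit_tensor_restriction m K r u v g" "finite K"
    and "\<And>i j k c. i < r \<Longrightarrow> j < r \<Longrightarrow> k < r \<Longrightarrow> c \<in> C \<Longrightarrow>
           inner (m (u i c) (v j c)) (g k c) = 0"
  shows "unit_tensor_restriction m (K - C) r u v g"
proof -
  have "cw_form m (K - C) (u i) (v j) (g k) = cw_form m K (u i) (v j) (g k)"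
    if "i < r" "j < r" "k < r" for i j k
    unfolding cw_form_def using assms(2,3) that by (intro sum.mono_neutral_left) auto
  then show ?thesis using assms(1) by (simp add: unit_tensor_restriction_def)
qed

definition restricted_combination ::
  "nat set \<Rightarrow> nat \<Rightarrow> (nat \<Rightarrow> nat \<Rightarrow> 'a::real_vector) \<Rightarrow> (nat \<Rightarrow> real) \<Rightarrow> nat \<Rightarrow> 'a" where
  "restricted_combination C r w b = (\<lambda>c. if c \<in> C then (\<Sum>j<r. b j *\<^sub>R w j) c else 0)"

lemma linear_restricted_combination: "linear (restricted_combination C r w)"
  by (rule linearI)
    (auto simp: restricted_combination_def sum_fun_apply scaleR_add_left sum.distrib scaleR_sum_right)

definition vanishing_combinations ::
  "nat \<Rightarrow> nat set \<Rightarrow> (nat \<Rightarrow> nat \<Rightarrow> 'a::real_vector) \<Rightarrow> (nat \<Rightarrow> real) set" where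
  "vanishing_combinations r C w = {b \<in> tuples r. restricted_combination C r w b = 0}"

lemma subspace_vanishing_combinations: "subspace (vanishing_combinations r C w)"
proof -
  have "vanishing_combinations r C w = tuples r \<inter> {b. restricted_combination C r w b = 0}"
    by (auto simp: vanishing_combinations_def)
  then show ?thesis
    unfolding tuples_eq_vanishing_off
    by (simp add: subspace_inter subspace_vanishing_off
        linear_subspace_kernel[OF linear_restricted_combination])
qed

lemma vanishing_combinationsD:
  "b \<in> vanishing_combinations r C w \<Longrightarrow> c \<in> C \<Longrightarrow> (\<Sum>j<r. b j *\<^sub>R w j) c = 0"
  by (auto simp: vanishing_combinations_def restricted_combination_def fun_eq_iff dest: spec[of _ c])

lemma unit_tensor_restriction_vanishing_second:
  assumes "bilinear m" "unit_tensor_restriction m K r u v g" "finite K"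
  obtains u' v' g' where
    "unit_tensor_restriction m (K - C) (dim (vanishing_combinations r C v)) u' v' g'"
proof -
  let ?t = "dim (vanishing_combinations r C v)"
  have "vanishing_combinations r C v \<subseteq> tuples r" by (auto simp: vanishing_combinations_def)
  then obtain k s where ks: "echelon_family r ?t k s" "\<forall>l<?t. s l \<in> vanishing_combinations r C v"
    using echelon_family_exists[OF subspace_vanishing_combinations _ order_refl] by blast
  have "unit_tensor_restriction m K ?t
      (\<lambda>l. u (k l)) (\<lambda>l. \<Sum>j<r. s l j *\<^sub>R v j) (\<lambda>l. \<Sum>j<r. (0(k l := 1)) j *\<^sub>R g j)"
    using assms(1,2) ks(1) echelon_family_pivot_vectors[OF ks(1)]
    by (rule unit_tensor_restriction_echelon)
  then have "unit_tensor_restriction m (K - C) ?t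
      (\<lambda>l. u (k l)) (\<lambda>l. \<Sum>j<r. s l j *\<^sub>R v j) (\<lambda>l. \<Sum>j<r. (0(k l := 1)) j *\<^sub>R g j)"
    using assms(3)
  proof (rule unit_tensor_restriction_remove_indices)
    fix i l l' c assume "l < ?t" "c \<in> C"
    then have "(\<Sum>j<r. s l j *\<^sub>R v j) c = 0" using ks(2) vanishing_combinationsD by blast
    then show "inner (m (u (k i) c) ((\<Sum>j<r. s l j *\<^sub>R v j) c))
        ((\<Sum>j<r. (0(k l' := 1)) j *\<^sub>R g j) c) = 0"
      by (simp add: bilinear_rzero[OF assms(1)])
  qed
  then show ?thesis by (rule that)
qed

lemma unit_tensor_restriction_vanishing_third:
  assumes "bilinear m" "unit_tensor_restriction m K r u v g" "finite K"
  obtains u' v' g' where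
    "unit_tensor_restriction m (K - C) (dim (vanishing_combinations r C g)) u' v' g'"
proof -
  let ?t = "dim (vanishing_combinations r C g)"
  have "vanishing_combinations r C g \<subseteq> tuples r" by (auto simp: vanishing_combinations_def)
  then obtain k s where ks: "echelon_family r ?t k s" "\<forall>l<?t. s l \<in> vanishing_combinations r C g"
    using echelon_family_exists[OF subspace_vanishing_combinations _ order_refl] by blast
  have "unit_tensor_restriction m K ?t
      (\<lambda>l. u (k l)) (\<lambda>l. \<Sum>j<r. (0(k l := 1)) j *\<^sub>R v j) (\<lambda>l. \<Sum>j<r. s l j *\<^sub>R g j)"
    using assms(1,2) echelon_family_pivot_vectors[OF ks(1)] ks(1)
    by (rule unit_tensor_restriction_echelon)
  then have "unit_tensor_restriction m (K - C) ?t
      (\<lambda>l. u (k l)) (\<lambda>l. \<Sum>j<r. (0(k l := 1)) j *\<^sub>R v j) (\<lambda>l. \<Sum>j<r. s l j *\<^sub>R g j)"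
    using assms(3)
  proof (rule unit_tensor_restriction_remove_indices)
    fix i l l' c assume "l' < ?t" "c \<in> C"
    then have "(\<Sum>j<r. s l' j *\<^sub>R g j) c = 0" using ks(2) vanishing_combinationsD by blast
    then show "inner (m (u (k i) c) ((\<Sum>j<r. (0(k l := 1)) j *\<^sub>R v j) c))
        ((\<Sum>j<r. s l' j *\<^sub>R g j) c) = 0"
      by simp
  qed
  then show ?thesis by (rule that)
qed

lemma unit_tensor_restriction_dim_count:
  fixes m :: "'a::euclidean_space \<Rightarrow> 'a \<Rightarrow> 'a"
  assumes DA: "real_division_algebra m" and W: "unit_tensor_restriction m K r u v g"
    and K: "finite K" and r: "0 < r"
  defines "C \<equiv> {c\<in>K. u (r - 1) c \<noteq> 0}"
  shows "2 * r \<le> dim (vanishing_combinations r C v) + dim (vanishing_combinations r C g)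
                  + card C * DIM('a) + 1"
proof -
  have bil: "bilinear m" using DA by (simp add: real_division_algebra_def)
  have C: "finite C" "C \<subseteq> K" using K by (auto simp: C_def)
  define x where "x = u (r - 1)"
  define LV where "LV b = (\<lambda>c. m (x c) (restricted_combination C r v b c))" for b
  define U1 where "U1 = LV ` tuples (r - 1)"
  define U2 where "U2 = restricted_combination C r g ` tuples r"
  have linLV: "linear LV"
    by (rule linearI) (simp_all add: LV_def linear_add[OF linear_restricted_combination]
        linear_scale[OF linear_restricted_combination] bilinear_radd[OF bil] bilinear_rmul[OF bil] fun_eq_iff)
  have coeff_span: "tuples n \<subseteq> span (unit_tuples {..<n})" "finite (unit_tuples {..<n})" for n
    by (simp_all add: tuples_eq_span)
  have "dim U1 + dim U2 \<le> card C * DIM('a)"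
  proof -
    have "w = 0" if w: "w \<in> U1" "w \<in> U2" for w
    proof -
      \<comment> \<open>pairing \<open>U1\<close> with \<open>U2\<close> evaluates the unit tensor at the slice \<open>r - 1\<close>,
        where the coefficients from \<open>tuples (r - 1)\<close> vanish\<close>
      obtain b where b: "b \<in> tuples (r - 1)" "w = LV b" using w(1) by (auto simp: U1_def)
      obtain y where y: "y \<in> tuples r" "w = restricted_combination C r g y" using w(2) by (auto simp: U2_def)
      have wV: "w c = m (x c) ((\<Sum>j<r. b j *\<^sub>R v j) c)" if "c \<in> C" for c
        using that fun_cong[OF b(2), of c] by (simp add: LV_def restricted_combination_def)
      have wG: "w c = (\<Sum>k<r. y k *\<^sub>R g k) c" if "c \<in> C" for c
        using that fun_cong[OF y(2), of c] by (simp add: restricted_combination_def)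
      have "(\<Sum>c\<in>C. inner (w c) (w c)) = cw_form m C x (\<Sum>j<r. b j *\<^sub>R v j) (\<Sum>k<r. y k *\<^sub>R g k)"
        unfolding cw_form_def by (intro sum.cong refl) (metis wV wG)
      also have "\<dots> = cw_form m K x (\<Sum>j<r. b j *\<^sub>R v j) (\<Sum>k<r. y k *\<^sub>R g k)"
        unfolding cw_form_def using K C(2)
        by (intro sum.mono_neutral_left) (auto simp: C_def x_def bilinear_lzero[OF bil])
      also have "\<dots> = b (r - 1) * y (r - 1)"
        unfolding x_def using r by (intro unit_tensor_restriction_combination[OF bil W]) simp
      also have "b (r - 1) = 0" using b(1) by (simp add: tuples_def)
      finally have "\<forall>c\<in>C. inner (w c) (w c) = 0"
        using C(1) by (simp add: sum_nonneg_eq_0_iff)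
      then show "w = 0" using y(2) by (auto simp: restricted_combination_def)
    qed
    moreover have "U1 \<subseteq> vanishing_off C" "U2 \<subseteq> vanishing_off C"
      by (auto simp: U1_def U2_def LV_def restricted_combination_def vanishing_off_def bilinear_rzero[OF bil])
    moreover have "subspace U1" "subspace U2"
      unfolding U1_def U2_def
      by (simp_all add: linear_subspace_image linLV linear_restricted_combination subspace_tuples)
    ultimately have "dim U1 + dim U2 \<le> dim (vanishing_off C :: (nat \<Rightarrow> 'a) set)"
      using span_unit_tuples[OF C(1)]
      by (intro dim_add_le_of_inter_zero[where F = "unit_tuples C"]) (auto simp: C(1))
    then show ?thesis by (simp add: dim_vanishing_off[OF C(1)])
  qed
  moreover have "r - 1 \<le> dim U1 + dim (vanishing_combinations r C v)"
  proof -
    have "{b \<in> tuples (r - 1). LV b = 0} \<subseteq> vanishing_combinations r C v"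
    proof safe
      fix b assume b: "b \<in> tuples (r - 1)" "LV b = 0"
      have "restricted_combination C r v b c = 0" for c
        using fun_cong[OF b(2), of c] real_division_algebra_mult_eq_0_iff[OF DA]
        by (auto simp: LV_def restricted_combination_def C_def x_def)
      then show "b \<in> vanishing_combinations r C v"
        using b(1) by (auto simp: vanishing_combinations_def tuples_def)
    qed
    then have "dim {b \<in> tuples (r - 1). LV b = 0} \<le> dim (vanishing_combinations r C v)"
      using coeff_span by (intro dim_mono_finite_span) (auto simp: vanishing_combinations_def)
    moreover have "dim (tuples (r - 1) :: (nat \<Rightarrow> real) set) \<le> dim U1 + dim {b \<in> tuples (r - 1). LV b = 0}"
      unfolding U1_def using subspace_tuples coeff_span linLV by (rule dim_le_dim_image_add_dim_kernel)
    ultimately show ?thesis by (simp add: dim_tuples)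
  qed
  moreover have "r \<le> dim U2 + dim (vanishing_combinations r C g)"
    using dim_le_dim_image_add_dim_kernel[OF subspace_tuples coeff_span linear_restricted_combination]
    by (simp add: U2_def vanishing_combinations_def dim_tuples)
  ultimately show ?thesis by linarith
qed

lemma unit_tensor_restriction_card_bound:
  fixes m :: "'a::euclidean_space \<Rightarrow> 'a \<Rightarrow> 'a"
  assumes DA: "real_division_algebra m" and even: "even DIM('a)"
    and "finite K" "unit_tensor_restriction m K r u v g"
  shows "2 * r \<le> DIM('a) * card K"
  using assms(3,4)
proof (induction "card K" arbitrary: K r u v g rule: less_induct)
  case less
  have bil: "bilinear m" using DA by (simp add: real_division_algebra_def)
  show ?case
  proof (cases "r = 0")
    case False
    define C where "C = {c\<in>K. u (r - 1) c \<noteq> 0}"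
    have "C \<noteq> {}"
    proof
      assume "C = {}"
      then have "cw_form m K (u (r - 1)) (v (r - 1)) (g (r - 1)) = 0"
        by (auto simp: C_def cw_form_def bilinear_lzero[OF bil])
      then show False using less.prems(2) False by (simp add: unit_tensor_restriction_def)
    qed
    moreover have "C \<subseteq> K" "finite C" using less.prems(1) by (auto simp: C_def)
    ultimately have card_K: "card K = card (K - C) + card C" "card (K - C) < card K"
      using less.prems(1) card_Diff_subset[of C K] card_mono[of K C] card_gt_0_iff[of C] by auto
    have fin: "finite (K - C)" using less.prems(1) by simp
    obtain u' v' g' where
      "unit_tensor_restriction m (K - C) (dim (vanishing_combinations r C v)) u' v' g'"
      by (rule unit_tensor_restriction_vanishing_second[OF bil less.prems(2,1)])
    then have "2 * dim (vanishing_combinations r C v) \<le> DIM('a) * card (K - C)"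
      by (rule less.hyps[OF card_K(2) fin])
    moreover obtain u' v' g' where
      "unit_tensor_restriction m (K - C) (dim (vanishing_combinations r C g)) u' v' g'"
      by (rule unit_tensor_restriction_vanishing_third[OF bil less.prems(2,1)])
    then have "2 * dim (vanishing_combinations r C g) \<le> DIM('a) * card (K - C)"
      by (rule less.hyps[OF card_K(2) fin])
    ultimately have "2 * r \<le> DIM('a) * card K + 1"
      using unit_tensor_restriction_dim_count[OF DA less.prems(2,1)] False card_K(1)
      by (simp add: C_def algebra_simps)
    moreover obtain q where "DIM('a) * card K = 2 * q"
      using even by (auto elim: evenE)
    ultimately show ?thesis by presburger
  qed simp
qed

lemma subrank_witness_cw_mult_unit_tensor_restriction:
  fixes m :: "'a::euclidean_space \<Rightarrow> 'a \<Rightarrow> 'a"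
  assumes bil: "bilinear m" and "subrank_witness (tuples n) (tuples n) (tuples n) (cw_mult m) r"
  obtains u v g where "unit_tensor_restriction m {..<n} r u v g"
proof -
  obtain u v psi where
    uv: "\<forall>i<r. u i \<in> tuples n \<and> v i \<in> tuples n" and
    lin: "\<forall>k<r. (\<forall>x\<in>tuples n. \<forall>y\<in>tuples n. psi k (x + y) = psi k x + psi k y) \<and>
                (\<forall>c. \<forall>x\<in>tuples n. psi k (c *\<^sub>R x) = c * psi k x)" and
    eq: "\<forall>a b :: nat \<Rightarrow> real. \<forall>k<r.
           psi k (cw_mult m (\<Sum>i<r. a i *\<^sub>R u i) (\<Sum>i<r. b i *\<^sub>R v i)) = a k * b k"
    using assms(2) unfolding subrank_witness_def by blast
  have "\<forall>k. \<exists>gk. k < r \<longrightarrow> (\<forall>w\<in>tuples n. psi k w = (\<Sum>c<n. inner (w c) (gk c)))"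
  proof
    fix k show "\<exists>gk. k < r \<longrightarrow> (\<forall>w\<in>tuples n. psi k w = (\<Sum>c<n. inner (w c) (gk c)))"
    proof (cases "k < r")
      case True
      with lin have "\<forall>x\<in>tuples n. \<forall>y\<in>tuples n. psi k (x + y) = psi k x + psi k y"
        "\<forall>c. \<forall>x\<in>tuples n. psi k (c *\<^sub>R x) = c * psi k x" by blast+
      then obtain gk where "\<And>w. w \<in> tuples n \<Longrightarrow> psi k w = (\<Sum>c<n. inner (w c) (gk c))"
        by (rule tuples_functional_representation) blast
      then show ?thesis by blast
    qed simp
  qed
  from choice[OF this] obtain g
    where g: "\<forall>k. k < r \<longrightarrow> (\<forall>w\<in>tuples n. psi k w = (\<Sum>c<n. inner (w c) (g k c)))" ..
  have "unit_tensor_restriction m {..<n} r u v g"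
    unfolding unit_tensor_restriction_def
  proof (intro allI impI)
    fix i j k assume ijk: "i < r" "j < r" "k < r"
    have "cw_mult m (u i) (v j) \<in> tuples n"
      using uv ijk by (auto simp: tuples_def cw_mult_def bilinear_lzero[OF bil])
    then have "cw_form m {..<n} (u i) (v j) (g k) = psi k (cw_mult m (u i) (v j))"
      using g ijk(3) by (simp add: cw_form_def cw_mult_def)
    also have "\<dots> = (0(i := 1)) k * (0(j := 1)) k"
      using eq[rule_format, where a = "0(i := 1)" and b = "0(j := 1)", OF ijk(3)]
      unfolding sum_unit_vector_combination[OF ijk(1)] sum_unit_vector_combination[OF ijk(2)] .
    finally show "cw_form m {..<n} (u i) (v j) (g k) = (if i = j \<and> j = k then 1 else 0)"
      by simp
  qed
  then show ?thesis by (rule that)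
qed

theorem theorem5p3:
  fixes m :: "'a::euclidean_space \<Rightarrow> 'a \<Rightarrow> 'a" and n :: nat
  assumes "real_division_algebra m"
    and "DIM('a) \<ge> 2"
  shows "real (subrank (tuples n) (tuples n) (tuples n) (cw_mult m))
           \<le> real n * (real DIM('a) / 2)"
proof -
  let ?P = "subrank_witness (tuples n) (tuples n) (tuples n) (cw_mult m)"
  have bil: "bilinear m" using assms(1) by (simp add: real_division_algebra_def)
  have bound: "2 * r \<le> DIM('a) * n" if witness: "?P r" for r
  proof -
    obtain u v g where "unit_tensor_restriction m {..<n} r u v g"
      using bil witness by (rule subrank_witness_cw_mult_unit_tensor_restriction)
    with unit_tensor_restriction_card_bound[OF assms(1) real_division_algebra_even_dim[OF assms]]
    show ?thesis by fastforce
  qed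
  have "?P 0" by (simp add: subrank_witness_def)
  then have "?P (Greatest ?P)"
  proof (rule GreatestI_nat)
    show "r \<le> DIM('a) * n" if "?P r" for r using bound[OF that] by linarith
  qed
  then have "2 * real (Greatest ?P) \<le> real DIM('a) * real n"
    using bound of_nat_mono by fastforce
  then show ?thesis by (simp add: subrank_def mult.commute)
qed

end
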